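(* Let $m\ge 1$, $N=2^m$, let $\mathcal{A}\subseteq[0,N-1]$ with complement $\mathcal{A}^c=[0,N-1]\setminus\mathcal{A}$, and let $\mathbf{P}\in\mathbb{F}_2^{N\times N}$ be upper triangular with all diagonal entries equal to $1$. Then $$\mathcal{C}_{\mathbf{P}\boldsymbol{G}_N}(\mathcal{A})^{\perp}=\mathcal{C}_{(\mathbf{P}^{t})^{-1}\mathbf{Q}_{\pi}\boldsymbol{G}_N\mathbf{Q}_{\pi}}(\mathcal{A}^c).$$
   Context: $[\ell,u]=\{\ell,\dots,u\}$. $\boldsymbol{G}_N=\begin{pmatrix}1&0\\1&1\end{pmatrix}^{\otimes m}$ over $\mathbb{F}_2$, rows and columns indexed by $0,\dots,N-1$. For $\mathbf{B}\in\mathbb{F}_2^{N\times N}$ and $\mathcal{S}\subseteq[0,N-1]$, $\mathcal{C}_{\mathbf{B}}(\mathcal{S})$ is the binary linear code spanned by the rows of $\mathbf{B}$ indexed by $\mathcal{S}$. $\mathbf{Q}_{\pi}$ is the permutation matrix of the permutation of $[0,N-1]$ swapping $i$ and $N-1-i$. $\perp$ denotes the dual code for the standard inner product over $\mathbb{F}_2$. *)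

theory Defs
  imports "Jordan_Normal_Form.Matrix" "HOL-Library.Z2"
begin

definition kron_mat :: "'a::times mat \<Rightarrow> 'a mat \<Rightarrow> 'a mat" where
  "kron_mat A B = mat (dim_row A * dim_row B) (dim_col A * dim_col B)
     (\<lambda>(i,j). A $$ (i div dim_row B, j div dim_col B) * B $$ (i mod dim_row B, j mod dim_col B))"

definition G2 :: "bit mat" where
  "G2 = mat 2 2 (\<lambda>(i,j). if j \<le> i then 1 else 0)"

fun kron_pow :: "bit mat \<Rightarrow> nat \<Rightarrow> bit mat" where
  "kron_pow A 0 = 1\<^sub>m 1"
| "kron_pow A (Suc k) = kron_mat A (kron_pow A k)"

definition G_N :: "nat \<Rightarrow> bit mat" where
  "G_N m = kron_pow G2 m"

definition Q_pi :: "nat \<Rightarrow> bit mat" where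
  "Q_pi N = mat N N (\<lambda>(i,j). if j = N - 1 - i then 1 else 0)"

definition row_code :: "bit mat \<Rightarrow> nat set \<Rightarrow> bit vec set" where
  "row_code B S = {v. \<exists>c :: nat \<Rightarrow> bit.
      v = vec (dim_col B) (\<lambda>j. \<Sum>i\<in>S. c i * B $$ (i, j))}"

definition dual_code :: "nat \<Rightarrow> bit vec set \<Rightarrow> bit vec set" where
  "dual_code n C = {v \<in> carrier_vec n. \<forall>w\<in>C. v \<bullet> w = 0}"

definition mat_inv :: "bit mat \<Rightarrow> bit mat" where
  "mat_inv A = (SOME B. B \<in> carrier_mat (dim_row A) (dim_row A) \<and> inverts_mat A B \<and> inverts_mat B A)"

end

theory Submission
  imports Defs "Jordan_Normal_Form.Determinant"
begin

text \<open>
  The reversal permutation of size \<open>p q\<close> is the Kronecker product of the reversals of sizes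
  \<open>p\<close> and \<open>q\<close>, so the mixed-product rule lifts the \<open>2 \<times> 2\<close> identity
  \<open>G\<^sub>2 Q\<^sub>\<pi> G\<^sub>2\<^sup>t = Q\<^sub>\<pi>\<close> over \<open>\<bbbF>\<^sub>2\<close> to
  \<open>G\<^sub>N Q\<^sub>\<pi> G\<^sub>N\<^sup>t = Q\<^sub>\<pi>\<close>. Consequently \<open>X = P G\<^sub>N\<close> and
  \<open>Y = (P\<^sup>t)\<^sup>-\<^sup>1 Q\<^sub>\<pi> G\<^sub>N Q\<^sub>\<pi>\<close> satisfy \<open>X Y\<^sup>t = I\<close>, hence also
  \<open>Y\<^sup>t X = I\<close>. A vector \<open>v\<close> is orthogonal to the rows of \<open>X\<close> indexed by \<open>\<A>\<close>
  iff \<open>X v\<close> vanishes on \<open>\<A>\<close>, and then \<open>v = Y\<^sup>t (X v)\<close> is a combination of the rows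
  of \<open>Y\<close> indexed by the complement; conversely \<open>X Y\<^sup>t c = c\<close>.
\<close>

text \<open>The simp rules of \<open>Z2\<close> turn sums and products of bits into xor and conjunction;
  the proofs below reason with the field laws instead.\<close>
declare add_bit_eq_xor[simp del] mult_bit_eq_and[simp del]

lemma sum_lessThan_mult_nat:
  fixes p q :: nat
  shows "(\<Sum>l<p * q. f l) = (\<Sum>a<p. \<Sum>b<q. f (a * q + b))"
proof (induction p)
  case (Suc p)
  have "(\<Sum>l<Suc p * q. f l) = (\<Sum>l<p * q. f l) + (\<Sum>l = p * q..<p * q + q. f l)"
    by (simp add: lessThan_atLeast0 sum.atLeastLessThan_concat add.commute)
  moreover have "(\<Sum>l = p * q..<p * q + q. f l) = (\<Sum>b<q. f (p * q + b))"
    using sum.shift_bounds_nat_ivl[of f 0 "p * q" q] by (simp add: lessThan_atLeast0 add.commute)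
  ultimately show ?case
    using Suc by simp
qed simp

lemma index_kron_mat:
  assumes "A \<in> carrier_mat r c" "B \<in> carrier_mat r' c'" "i < r * r'" "j < c * c'"
  shows "kron_mat A B $$ (i, j) = A $$ (i div r', j div c') * B $$ (i mod r', j mod c')"
  using assms by (simp add: kron_mat_def)

lemma kron_mat_mult:
  fixes A C :: "'a::comm_semiring_0 mat"
  assumes A: "A \<in> carrier_mat r p" and B: "B \<in> carrier_mat r' q"
    and C: "C \<in> carrier_mat p s" and D: "D \<in> carrier_mat q s'"
  shows "kron_mat A B * kron_mat C D = kron_mat (A * C) (B * D)"
proof (rule eq_matI)
  fix i j assume "i < dim_row (kron_mat (A * C) (B * D))" "j < dim_col (kron_mat (A * C) (B * D))"
  then have i: "i < r * r'" and j: "j < s * s'" using A B C D by (simp_all add: kron_mat_def)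
  then have idx: "i div r' < r" "i mod r' < r'" "j div s' < s" "j mod s' < s'"
    by (auto simp: less_mult_imp_div_less mult.commute intro!: mod_less_divisor Nat.gr0I)
  have "(kron_mat A B * kron_mat C D) $$ (i, j)
      = (\<Sum>l<p * q. kron_mat A B $$ (i, l) * kron_mat C D $$ (l, j))"
    using A B C D i j by (simp add: kron_mat_def scalar_prod_def lessThan_atLeast0)
  also have "\<dots> = (\<Sum>a<p. \<Sum>b<q.
      (A $$ (i div r', a) * C $$ (a, j div s')) * (B $$ (i mod r', b) * D $$ (b, j mod s')))"
  proof -
    have "a * q + b < p * q" "(a * q + b) div q = a" "(a * q + b) mod q = b" if "a < p" "b < q" for a b
    proof -
      have "a * q + b < Suc a * q" using that by simp
      also have "\<dots> \<le> p * q" using that by (intro mult_le_mono1) simp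
      finally show "a * q + b < p * q" .
    qed (use that in simp_all)
    then show ?thesis
      unfolding sum_lessThan_mult_nat
      using A B C D i j by (intro sum.cong refl) (simp add: index_kron_mat mult_ac)
  qed
  also have "\<dots> = kron_mat (A * C) (B * D) $$ (i, j)"
    using A B C D i j idx by (simp add: kron_mat_def scalar_prod_def lessThan_atLeast0 sum_product)
  finally show "(kron_mat A B * kron_mat C D) $$ (i, j) = kron_mat (A * C) (B * D) $$ (i, j)" .
qed (use A B C D in \<open>simp_all add: kron_mat_def\<close>)

lemma transpose_kron_mat:
  "transpose_mat (kron_mat A B) = kron_mat (transpose_mat A) (transpose_mat B)"
proof (rule eq_matI)
  fix i j assume "i < dim_row (kron_mat (transpose_mat A) (transpose_mat B))"
    "j < dim_col (kron_mat (transpose_mat A) (transpose_mat B))"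
  then have i: "i < dim_col A * dim_col B" and j: "j < dim_row A * dim_row B"
    by (simp_all add: kron_mat_def)
  then have "i div dim_col B < dim_col A" "i mod dim_col B < dim_col B"
    "j div dim_row B < dim_row A" "j mod dim_row B < dim_row B"
    by (auto simp: less_mult_imp_div_less mult.commute intro!: mod_less_divisor Nat.gr0I)
  with i j show "transpose_mat (kron_mat A B) $$ (i, j) = kron_mat (transpose_mat A) (transpose_mat B) $$ (i, j)"
    by (simp add: kron_mat_def)
qed (simp_all add: kron_mat_def)

lemma Q_pi_carrier: "Q_pi n \<in> carrier_mat n n"
  by (simp add: Q_pi_def)

lemma transpose_Q_pi: "transpose_mat (Q_pi n) = Q_pi n"
  by (rule eq_matI) (auto simp: Q_pi_def)

lemma Q_pi_mult_Q_pi: "Q_pi n * Q_pi n = 1\<^sub>m n"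
proof (rule eq_matI)
  fix i j assume "i < dim_row (1\<^sub>m n)" "j < dim_col (1\<^sub>m n)"
  then have i: "i < n" and j: "j < n" by simp_all
  have "(Q_pi n * Q_pi n) $$ (i, j)
      = (\<Sum>l\<in>{0..<n}. (if l = n - 1 - i then 1 else 0) * (if j = n - 1 - l then 1 else 0))"
    using i j by (simp add: scalar_prod_def Q_pi_def)
  also have "\<dots> = (\<Sum>l\<in>{0..<n}. if l = n - 1 - i then (if j = n - 1 - l then 1 else 0) else 0)"
    by (intro sum.cong refl) auto
  also have "\<dots> = 1\<^sub>m n $$ (i, j)" using i j by (simp add: sum.delta)
  finally show "(Q_pi n * Q_pi n) $$ (i, j) = 1\<^sub>m n $$ (i, j)" .
qed (simp_all add: Q_pi_def)

lemma reverse_index_mult: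
  fixes a b p q :: nat
  assumes "a < p" "b < q"
  shows "p * q - 1 - (a * q + b) = (p - 1 - a) * q + (q - 1 - b)"
proof -
  obtain a' b' where "p = Suc (a + a')" "q = Suc (b + b')"
    using assms by (metis less_iff_Suc_add)
  then show ?thesis by (simp add: algebra_simps)
qed

lemma Q_pi_mult_eq_kron_mat: "Q_pi (p * q) = kron_mat (Q_pi p) (Q_pi q)"
proof (rule eq_matI)
  fix i j assume "i < dim_row (kron_mat (Q_pi p) (Q_pi q))" "j < dim_col (kron_mat (Q_pi p) (Q_pi q))"
  then have i: "i < p * q" and j: "j < p * q" by (simp_all add: kron_mat_def Q_pi_def)
  then have q: "q > 0" by (auto intro: Nat.gr0I)
  have idx: "i div q < p" "i mod q < q" "j div q < p" "j mod q < q"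
    using i j q by (simp_all add: less_mult_imp_div_less)
  have "p * q - 1 - i = (p - 1 - i div q) * q + (q - 1 - i mod q)"
    using reverse_index_mult[OF idx(1,2)] by simp
  moreover have "j = x * q + y \<longleftrightarrow> j div q = x \<and> j mod q = y" if "y < q" for x y
    using that div_mult_mod_eq[of j q] by auto
  ultimately have "j = p * q - 1 - i \<longleftrightarrow> j div q = p - 1 - i div q \<and> j mod q = q - 1 - i mod q"
    using q by simp
  then show "Q_pi (p * q) $$ (i, j) = kron_mat (Q_pi p) (Q_pi q) $$ (i, j)"
    using i j idx by (simp add: kron_mat_def Q_pi_def)
qed (simp_all add: kron_mat_def Q_pi_def)

lemma G2_carrier: "G2 \<in> carrier_mat 2 2"
  by (simp add: G2_def)

lemma G_N_carrier: "G_N m \<in> carrier_mat (2^m) (2^m)"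
  unfolding G_N_def by (induction m) (simp_all add: kron_mat_def G2_def)

lemma G2_Q_pi_transpose: "G2 * Q_pi 2 * transpose_mat G2 = Q_pi 2"
proof (rule eq_matI)
  fix i j assume "i < dim_row (Q_pi 2)" "j < dim_col (Q_pi 2)"
  then have "i < 2" "j < 2" by (simp_all add: Q_pi_def)
  then show "(G2 * Q_pi 2 * transpose_mat G2) $$ (i, j) = Q_pi 2 $$ (i, j)"
    by (auto simp: less_2_cases_iff G2_def Q_pi_def scalar_prod_def numeral_2_eq_2)
qed (simp_all add: G2_def Q_pi_def)

lemma G_N_Q_pi_transpose: "G_N m * Q_pi (2^m) * transpose_mat (G_N m) = Q_pi (2^m)"
proof (induction m)
  case 0
  have "Q_pi 1 = 1\<^sub>m 1" by (rule eq_matI) (simp_all add: Q_pi_def)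
  then show ?case by (simp add: G_N_def)
next
  case (Suc m)
  have "G_N (Suc m) * Q_pi (2^Suc m) * transpose_mat (G_N (Suc m))
      = kron_mat G2 (G_N m) * kron_mat (Q_pi 2) (Q_pi (2^m)) * kron_mat (transpose_mat G2) (transpose_mat (G_N m))"
    by (simp add: G_N_def Q_pi_mult_eq_kron_mat transpose_kron_mat)
  also have "\<dots> = kron_mat (G2 * Q_pi 2) (G_N m * Q_pi (2^m))
      * kron_mat (transpose_mat G2) (transpose_mat (G_N m))"
    by (simp only: kron_mat_mult[OF G2_carrier G_N_carrier Q_pi_carrier Q_pi_carrier])
  also have "\<dots> = kron_mat (G2 * Q_pi 2 * transpose_mat G2) (G_N m * Q_pi (2^m) * transpose_mat (G_N m))"
    by (rule kron_mat_mult) (auto intro: mult_carrier_mat G2_carrier G_N_carrier Q_pi_carrier)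
  also have "\<dots> = Q_pi (2^Suc m)"
    by (simp add: Suc.IH G2_Q_pi_transpose Q_pi_mult_eq_kron_mat)
  finally show ?case .
qed

definition supported_on :: "'a::zero vec \<Rightarrow> nat set \<Rightarrow> bool" where
  "supported_on c S \<longleftrightarrow> (\<forall>i < dim_vec c. i \<notin> S \<longrightarrow> c $ i = 0)"

lemma scalar_prod_supported_on_eq_0:
  fixes c w :: "'a::semiring_0 vec"
  assumes "supported_on c S" and "dim_vec w = dim_vec c" and "\<forall>i \<in> S. w $ i = 0"
  shows "c \<bullet> w = 0"
  unfolding scalar_prod_def using assms
  by (intro sum.neutral ballI) (auto simp: supported_on_def)

lemma scalar_prod_transpose_mult_vec:
  fixes B :: "'a::comm_semiring_0 mat"
  assumes v: "v \<in> carrier_vec (dim_col B)" and c: "c \<in> carrier_vec (dim_row B)"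
  shows "v \<bullet> (transpose_mat B *\<^sub>v c) = c \<bullet> (B *\<^sub>v v)"
proof -
  have "transpose_mat B *\<^sub>v c \<in> carrier_vec (dim_col B)" by (intro carrier_vecI) simp
  then have "v \<bullet> (transpose_mat B *\<^sub>v c) = (transpose_mat B *\<^sub>v c) \<bullet> v"
    by (rule comm_scalar_prod[OF v])
  also have "\<dots> = c \<bullet> (B *\<^sub>v v)"
    by (rule transpose_vec_mult_scalar[OF carrier_mat_triv v c])
  finally show ?thesis .
qed

lemma mem_row_code_iff:
  assumes S: "S \<subseteq> {0..<dim_row B}"
  shows "v \<in> row_code B S \<longleftrightarrow>
    (\<exists>c \<in> carrier_vec (dim_row B). supported_on c S \<and> v = transpose_mat B *\<^sub>v c)"
    (is "_ \<longleftrightarrow> ?combination")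
proof -
  have combination: "transpose_mat B *\<^sub>v c = vec (dim_col B) (\<lambda>j. \<Sum>i\<in>S. c $ i * B $$ (i, j))"
    if c: "c \<in> carrier_vec (dim_row B)" "supported_on c S" for c
  proof (rule eq_vecI)
    fix j assume "j < dim_vec (vec (dim_col B) (\<lambda>j. \<Sum>i\<in>S. c $ i * B $$ (i, j)))"
    then have j: "j < dim_col B" by simp
    have "(transpose_mat B *\<^sub>v c) $ j = (\<Sum>i\<in>{0..<dim_row B}. c $ i * B $$ (i, j))"
      using c j by (simp add: scalar_prod_def mult.commute)
    also have "\<dots> = (\<Sum>i\<in>S. c $ i * B $$ (i, j))"
      using S c by (intro sum.mono_neutral_right) (auto simp: supported_on_def)
    finally show "(transpose_mat B *\<^sub>v c) $ j
        = vec (dim_col B) (\<lambda>j. \<Sum>i\<in>S. c $ i * B $$ (i, j)) $ j"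
      using j by simp
  qed simp
  show ?thesis
  proof
    assume "v \<in> row_code B S"
    then obtain f where v: "v = vec (dim_col B) (\<lambda>j. \<Sum>i\<in>S. f i * B $$ (i, j))"
      unfolding row_code_def by blast
    define c where "c = vec (dim_row B) (\<lambda>i. if i \<in> S then f i else 0)"
    have "c \<in> carrier_vec (dim_row B)" and "supported_on c S"
      by (simp_all add: c_def supported_on_def)
    moreover have "v = transpose_mat B *\<^sub>v c"
      using S calculation by (simp add: combination c_def v subset_iff cong: sum.cong)
    ultimately show ?combination by blast
  next
    assume ?combination
    then show "v \<in> row_code B S"
      unfolding row_code_def by (auto simp: combination)
  qed
qed

lemma orthogonal_row_code_iff:
  assumes v: "v \<in> carrier_vec (dim_col B)" and S: "S \<subseteq> {0..<dim_row B}"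
  shows "(\<forall>w \<in> row_code B S. v \<bullet> w = 0) \<longleftrightarrow> (\<forall>i \<in> S. (B *\<^sub>v v) $ i = 0)"
proof
  assume orth: "\<forall>w \<in> row_code B S. v \<bullet> w = 0"
  show "\<forall>i \<in> S. (B *\<^sub>v v) $ i = 0"
  proof
    fix i assume i: "i \<in> S"
    let ?e = "unit_vec (dim_row B) i"
    have "supported_on ?e S" using i by (auto simp: supported_on_def unit_vec_def)
    then have "transpose_mat B *\<^sub>v ?e \<in> row_code B S"
      using mem_row_code_iff[OF S] unit_vec_carrier by blast
    then have "v \<bullet> (transpose_mat B *\<^sub>v ?e) = 0" using orth by blast
    then have "?e \<bullet> (B *\<^sub>v v) = 0"
      using scalar_prod_transpose_mult_vec[OF v unit_vec_carrier] by simp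
    moreover have "?e \<bullet> (B *\<^sub>v v) = (B *\<^sub>v v) $ i"
      using i S by (intro scalar_prod_left_unit carrier_vecI) auto
    ultimately show "(B *\<^sub>v v) $ i = 0" by simp
  qed
next
  assume ker: "\<forall>i \<in> S. (B *\<^sub>v v) $ i = 0"
  show "\<forall>w \<in> row_code B S. v \<bullet> w = 0"
  proof
    fix w assume "w \<in> row_code B S"
    then obtain c where c: "c \<in> carrier_vec (dim_row B)" "supported_on c S"
      and w: "w = transpose_mat B *\<^sub>v c"
      using mem_row_code_iff[OF S] by blast
    have "c \<bullet> (B *\<^sub>v v) = 0"
      using c ker by (intro scalar_prod_supported_on_eq_0) auto
    then show "v \<bullet> w = 0"
      unfolding w scalar_prod_transpose_mult_vec[OF v c(1)] .
  qed
qed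

lemma dual_code_row_code:
  assumes X: "X \<in> carrier_mat n n" and Y: "Y \<in> carrier_mat n n"
    and XY: "X * transpose_mat Y = 1\<^sub>m n" and A: "A \<subseteq> {0..<n}"
  shows "dual_code n (row_code X A) = row_code Y ({0..<n} - A)"
proof -
  have A_rows: "A \<subseteq> {0..<dim_row X}" and Ac_rows: "{0..<n} - A \<subseteq> {0..<dim_row Y}"
    using X Y A by auto
  have dual_iff: "v \<in> dual_code n (row_code X A)
      \<longleftrightarrow> v \<in> carrier_vec n \<and> (\<forall>i \<in> A. (X *\<^sub>v v) $ i = 0)" for v
    using orthogonal_row_code_iff[OF _ A_rows] X by (auto simp: dual_code_def)
  show ?thesis
  proof (intro equalityI subsetI)
    fix v assume "v \<in> dual_code n (row_code X A)"
    then have v: "v \<in> carrier_vec n" and ker: "\<forall>i \<in> A. (X *\<^sub>v v) $ i = 0"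
      by (simp_all add: dual_iff)
    have "transpose_mat Y * X = 1\<^sub>m n"
      using mat_mult_left_right_inverse[OF X _ XY] Y by simp
    then have "v = transpose_mat Y *\<^sub>v (X *\<^sub>v v)"
      using X Y v by (metis assoc_mult_mat_vec one_mult_mat_vec transpose_carrier_mat)
    moreover have "X *\<^sub>v v \<in> carrier_vec (dim_row Y)" using X Y by (intro carrier_vecI) simp
    moreover have "supported_on (X *\<^sub>v v) ({0..<n} - A)"
      using X ker unfolding supported_on_def by auto
    ultimately show "v \<in> row_code Y ({0..<n} - A)"
      unfolding mem_row_code_iff[OF Ac_rows] by blast
  next
    fix v assume "v \<in> row_code Y ({0..<n} - A)"
    then obtain c where c: "c \<in> carrier_vec n" "supported_on c ({0..<n} - A)"
      and v: "v = transpose_mat Y *\<^sub>v c"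
      using Y unfolding mem_row_code_iff[OF Ac_rows] by auto
    have "X *\<^sub>v v = (X * transpose_mat Y) *\<^sub>v c"
      using X Y c by (simp add: v)
    then have "X *\<^sub>v v = c" using XY c by simp
    moreover have "v \<in> carrier_vec n" using Y by (simp add: v carrier_vecI)
    ultimately show "v \<in> dual_code n (row_code X A)"
      using c A by (auto simp: dual_iff supported_on_def)
  qed
qed

lemma mat_inv_left_inverse:
  assumes A: "A \<in> carrier_mat n n" and det: "det A \<noteq> 0"
  shows "mat_inv A \<in> carrier_mat n n" "mat_inv A * A = 1\<^sub>m n"
proof -
  obtain B where "B \<in> carrier_mat n n" "B * A = 1\<^sub>m n" "A * B = 1\<^sub>m n"
    using det_non_zero_imp_unit[OF A det] unfolding Units_def by (auto simp: ring_mat_simps)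
  then have "\<exists>B. B \<in> carrier_mat (dim_row A) (dim_row A) \<and> inverts_mat A B \<and> inverts_mat B A"
    using A by (auto simp: inverts_mat_def)
  from someI_ex[OF this] show "mat_inv A \<in> carrier_mat n n" "mat_inv A * A = 1\<^sub>m n"
    using A unfolding mat_inv_def inverts_mat_def by auto
qed

lemma det_unit_upper_triangular:
  fixes P :: "'a::comm_ring_1 mat"
  assumes P: "P \<in> carrier_mat n n" and "upper_triangular P" and "\<forall>i < n. P $$ (i, i) = 1"
  shows "det P = 1"
proof -
  have "diag_mat P = replicate n 1"
    using P assms(3) by (auto simp: diag_mat_def intro: nth_equalityI)
  then show ?thesis
    using det_upper_triangular[OF assms(2) P] by simp
qed

lemma mult_transpose_dual_generator:
  assumes P: "P \<in> carrier_mat (2^m) (2^m)"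
    and B: "B \<in> carrier_mat (2^m) (2^m)" and BP: "B * transpose_mat P = 1\<^sub>m (2^m)"
  shows "P * G_N m * transpose_mat (B * Q_pi (2^m) * G_N m * Q_pi (2^m)) = 1\<^sub>m (2^m)"
proof -
  let ?N = "2^m :: nat" and ?G = "G_N m" and ?Q = "Q_pi (2^m)"
  have G: "?G \<in> carrier_mat ?N ?N" and Q: "?Q \<in> carrier_mat ?N ?N"
    by (rule G_N_carrier, rule Q_pi_carrier)
  have BQ: "B * ?Q \<in> carrier_mat ?N ?N" and BQG: "B * ?Q * ?G \<in> carrier_mat ?N ?N"
    using B G Q by simp_all
  have "transpose_mat (B * ?Q * ?G * ?Q) = ?Q * (transpose_mat ?G * (?Q * transpose_mat B))"
    unfolding transpose_mult[OF BQG Q] transpose_mult[OF BQ G] transpose_mult[OF B Q] transpose_Q_pi ..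
  then have "P * ?G * transpose_mat (B * ?Q * ?G * ?Q) = P * ((?G * ?Q * transpose_mat ?G) * ?Q) * transpose_mat B"
    using P B G Q transpose_carrier_mat[of ?G ?N ?N] transpose_carrier_mat[of B ?N ?N]
    by (simp add: assoc_mult_mat[where n\<^sub>1 = ?N and n\<^sub>2 = ?N and n\<^sub>3 = ?N and n\<^sub>4 = ?N])
  also have "\<dots> = transpose_mat (B * transpose_mat P)"
    using P B by (simp add: G_N_Q_pi_transpose Q_pi_mult_Q_pi transpose_mult[of B ?N ?N])
  finally show ?thesis using BP by simp
qed

theorem corollary2:
  fixes m :: nat and A :: "nat set" and P :: "bit mat"
  assumes "m \<ge> 1"
    and "A \<subseteq> {0..<2^m}"
    and "P \<in> carrier_mat (2^m) (2^m)"
    and "upper_triangular P"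
    and "\<forall>i < 2^m. P $$ (i, i) = 1"
  shows "dual_code (2^m) (row_code (P * G_N m) A) =
         row_code (mat_inv (transpose_mat P) * Q_pi (2^m) * G_N m * Q_pi (2^m)) ({0..<2^m} - A)"
proof -
  have Pt: "transpose_mat P \<in> carrier_mat (2^m) (2^m)" using assms(3) by simp
  have "det (transpose_mat P) = 1"
    using det_unit_upper_triangular[OF assms(3-5)] det_transpose[OF assms(3)] by simp
  then have B: "mat_inv (transpose_mat P) \<in> carrier_mat (2^m) (2^m)"
    "mat_inv (transpose_mat P) * transpose_mat P = 1\<^sub>m (2^m)"
    using mat_inv_left_inverse[OF Pt] by simp_all
  show ?thesis
    using G_N_carrier[of m] Q_pi_carrier[of "2^m"] assms(3) B(1)
    by (intro dual_code_row_code mult_transpose_dual_generator[OF assms(3) B] assms(2))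
      (blast intro: mult_carrier_mat)+
qed

end
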